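(* The logic $\mathsf{ICK}\oplus(p\mathrel{\Box\!\!\!\rightarrow} p)\oplus(((p\mathrel{\Box\!\!\!\rightarrow} q)\wedge(q\mathrel{\Box\!\!\!\rightarrow} r))\to(p\mathrel{\Box\!\!\!\rightarrow} r))\oplus((p\to q)\to(p\mathrel{\Box\!\!\!\rightarrow} q))$ is sound and complete with respect to the conditional frames $(X,\leq,\mathcal{R})$ satisfying, for all $x\in X$ and upsets $a,b$: $R_a[x]\subseteq{\uparrow}x\cap a$, and $R_a[x]\subseteq b$ implies $R_a[x]\subseteq{\uparrow}R_b[x]$.
   Context: Formulas: $\phi ::= p\mid\bot\mid\phi\wedge\phi\mid\phi\vee\phi\mid\phi\to\phi\mid\phi\mathrel{\Box\!\!\!\rightarrow}\phi$. $\mathsf{ICK}\oplus\Gamma$ is the smallest set containing intuitionistic propositional logic, $\Gamma$, $(p\mathrel{\Box\!\!\!\rightarrow}(q\wedge r))\leftrightarrow((p\mathrel{\Box\!\!\!\rightarrow} q)\wedge(p\mathrel{\Box\!\!\!\rightarrow} r))$ and $(p\mathrel{\Box\!\!\!\rightarrow}\top)\leftrightarrow\top$, closed under uniform substitution, modus ponens and congruence rules for both arguments of $\mathrel{\Box\!\!\!\rightarrow}$. A conditional frame is $(X,\leq,\mathcal{R})$, $(X,\leq)$ a nonempty preorder, $\mathcal{R}=\{R_a\mid a\text{ an upset}\}$ with $(\leq\circ R_a)\subseteq(R_a\circ\leq)$; valuations assign upsets to letters and $x\models\phi\mathrel{\Box\!\!\!\rightarrow}\psi$ iff every $y$ with $xR_{V(\phi)}y$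 satisfies $\psi$. *)

theory Defs
  imports Main
begin

datatype fm =
    Var nat
  | Bot
  | And fm fm
  | Or fm fm
  | Imp fm fm
  | Cond fm fm

definition Top :: fm where "Top = Imp Bot Bot"
definition Iff :: "fm \<Rightarrow> fm \<Rightarrow> fm" where "Iff a b = And (Imp a b) (Imp b a)"

primrec subst :: "(nat \<Rightarrow> fm) \<Rightarrow> fm \<Rightarrow> fm" where
  "subst \<sigma> (Var n) = \<sigma> n"
| "subst \<sigma> Bot = Bot"
| "subst \<sigma> (And a b) = And (subst \<sigma> a) (subst \<sigma> b)"
| "subst \<sigma> (Or a b) = Or (subst \<sigma> a) (subst \<sigma> b)"
| "subst \<sigma> (Imp a b) = Imp (subst \<sigma> a) (subst \<sigma> b)"
| "subst \<sigma> (Cond a b) = Cond (subst \<sigma> a) (subst \<sigma> b)"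

abbreviation "P \<equiv> Var 0"
abbreviation "Q \<equiv> Var 1"
abbreviation "R \<equiv> Var 2"

text \<open>Hilbert-style axioms of intuitionistic propositional logic (with letters p,q,r;
  closure under uniform substitution yields all instances).\<close>
definition IPC_axioms :: "fm set" where
  "IPC_axioms = {
     Imp P (Imp Q P),
     Imp (Imp P (Imp Q R)) (Imp (Imp P Q) (Imp P R)),
     Imp (And P Q) P,
     Imp (And P Q) Q,
     Imp P (Imp Q (And P Q)),
     Imp P (Or P Q),
     Imp Q (Or P Q),
     Imp (Imp P R) (Imp (Imp Q R) (Imp (Or P Q) R)),
     Imp Bot P }"

definition ICK_axioms :: "fm set" where
  "ICK_axioms = {
     Iff (Cond P (And Q R)) (And (Cond P Q) (Cond P R)),
     Iff (Cond P Top) Top }"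

inductive_set ICK_ext :: "fm set \<Rightarrow> fm set" for \<Gamma> :: "fm set" where
  ax_ipc: "\<phi> \<in> IPC_axioms \<Longrightarrow> \<phi> \<in> ICK_ext \<Gamma>"
| ax_gamma: "\<phi> \<in> \<Gamma> \<Longrightarrow> \<phi> \<in> ICK_ext \<Gamma>"
| ax_ick: "\<phi> \<in> ICK_axioms \<Longrightarrow> \<phi> \<in> ICK_ext \<Gamma>"
| us: "\<phi> \<in> ICK_ext \<Gamma> \<Longrightarrow> subst \<sigma> \<phi> \<in> ICK_ext \<Gamma>"
| mp: "Imp \<phi> \<psi> \<in> ICK_ext \<Gamma> \<Longrightarrow> \<phi> \<in> ICK_ext \<Gamma> \<Longrightarrow> \<psi> \<in> ICK_ext \<Gamma>"
| cong_l: "Iff \<phi> \<psi> \<in> ICK_ext \<Gamma> \<Longrightarrow> Iff (Cond \<phi> \<chi>) (Cond \<psi> \<chi>) \<in> ICK_ext \<Gamma>"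
| cong_r: "Iff \<phi> \<psi> \<in> ICK_ext \<Gamma> \<Longrightarrow> Iff (Cond \<chi> \<phi>) (Cond \<chi> \<psi>) \<in> ICK_ext \<Gamma>"

definition L511 :: "fm set" where
  "L511 = ICK_ext {
     Cond P P,
     Imp (And (Cond P Q) (Cond Q R)) (Cond P R),
     Imp (Imp P Q) (Cond P Q) }"

definition upset :: "'w set \<Rightarrow> 'w rel \<Rightarrow> 'w set \<Rightarrow> bool" where
  "upset X le a \<longleftrightarrow> a \<subseteq> X \<and> (\<forall>x\<in>a. \<forall>y\<in>X. (x, y) \<in> le \<longrightarrow> y \<in> a)"

definition up :: "'w set \<Rightarrow> 'w rel \<Rightarrow> 'w set \<Rightarrow> 'w set" where
  "up X le S = {y \<in> X. \<exists>s\<in>S. (s, y) \<in> le}"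

text \<open>The values of R on non-upsets are irrelevant.\<close>
definition cframe :: "'w set \<Rightarrow> 'w rel \<Rightarrow> ('w set \<Rightarrow> 'w rel) \<Rightarrow> bool" where
  "cframe X le Rs \<longleftrightarrow>
     X \<noteq> {} \<and> le \<subseteq> X \<times> X \<and> refl_on X le \<and> trans le \<and>
     (\<forall>a. upset X le a \<longrightarrow> Rs a \<subseteq> X \<times> X \<and> le O Rs a \<subseteq> Rs a O le)"

definition valuation :: "'w set \<Rightarrow> 'w rel \<Rightarrow> (nat \<Rightarrow> 'w set) \<Rightarrow> bool" where
  "valuation X le V \<longleftrightarrow> (\<forall>n. upset X le (V n))"

primrec sat :: "'w set \<Rightarrow> 'w rel \<Rightarrow> ('w set \<Rightarrow> 'w rel) \<Rightarrow> (nat \<Rightarrow> 'w set) \<Rightarrow> 'w \<Rightarrow> fm \<Rightarrow> bool" where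
  "sat X le Rs V x (Var n) \<longleftrightarrow> x \<in> V n"
| "sat X le Rs V x Bot \<longleftrightarrow> False"
| "sat X le Rs V x (And a b) \<longleftrightarrow> sat X le Rs V x a \<and> sat X le Rs V x b"
| "sat X le Rs V x (Or a b) \<longleftrightarrow> sat X le Rs V x a \<or> sat X le Rs V x b"
| "sat X le Rs V x (Imp a b) \<longleftrightarrow>
     (\<forall>y\<in>X. (x, y) \<in> le \<longrightarrow> sat X le Rs V y a \<longrightarrow> sat X le Rs V y b)"
| "sat X le Rs V x (Cond a b) \<longleftrightarrow>
     (\<forall>y. (x, y) \<in> Rs {z \<in> X. sat X le Rs V z a} \<longrightarrow> sat X le Rs V y b)"

definition valid_frame :: "'w set \<Rightarrow> 'w rel \<Rightarrow> ('w set \<Rightarrow> 'w rel) \<Rightarrow> fm \<Rightarrow> bool" where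
  "valid_frame X le Rs \<phi> \<longleftrightarrow> (\<forall>V. valuation X le V \<longrightarrow> (\<forall>x\<in>X. sat X le Rs V x \<phi>))"

definition frame511 :: "'w set \<Rightarrow> 'w rel \<Rightarrow> ('w set \<Rightarrow> 'w rel) \<Rightarrow> bool" where
  "frame511 X le Rs \<longleftrightarrow> cframe X le Rs \<and>
     (\<forall>x\<in>X. \<forall>a. upset X le a \<longrightarrow>
        Rs a `` {x} \<subseteq> up X le {x} \<inter> a \<and>
        (\<forall>b. upset X le b \<longrightarrow> Rs a `` {x} \<subseteq> b \<longrightarrow> Rs a `` {x} \<subseteq> up X le (Rs b `` {x})))"

definition valid511 :: "'w itself \<Rightarrow> fm \<Rightarrow> bool" where
  "valid511 _ \<phi> \<longleftrightarrow>
     (\<forall>(X :: 'w set) le Rs. frame511 X le Rs \<longrightarrow> valid_frame X le Rs \<phi>)"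

end

theory Submission
  imports Defs
begin

text \<open>
  Soundness: in every conditional frame truth sets are upsets, so frame validity is closed
  under substitution and under the rules of ICK; the first frame condition validates
  \<open>p \<box>\<rightarrow> p\<close> and \<open>(p \<rightarrow> q) \<rightarrow> (p \<box>\<rightarrow> q)\<close>, the second one the transitivity axiom.

  Completeness: the canonical frame consists of the prime theories ordered by inclusion.
  Writing \<open>w\<^sup>\<phi> = {c. \<phi> \<box>\<rightarrow> c \<in> w}\<close>, put \<open>x R\<^sub>A y\<close> iff some prime \<open>w \<supseteq> x\<close> and some \<open>\<phi>\<close>
  satisfy \<open>w\<^sup>\<phi> \<subseteq> y\<close> and every prime extension of \<open>w\<^sup>\<phi>\<close> lies in \<open>A\<close>. Both frame
  conditions then hold by construction (using \<open>w \<subseteq> w\<^sup>\<phi>\<close>), and since a theory is the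
  intersection of its prime extensions, the truth lemma for \<open>\<box>\<rightarrow>\<close> follows from
  \<open>\<phi> \<in> w\<^sup>\<phi>\<close> and from \<open>\<psi> \<in> w\<^sup>\<phi> \<Longrightarrow> w\<^sup>\<psi> \<subseteq> w\<^sup>\<phi>\<close> (transitivity).
\<close>

section \<open>Soundness\<close>

lemma cframeD:
  assumes "cframe X le Rs"
  shows cframe_le_subset: "le \<subseteq> X \<times> X"
    and cframe_refl: "x \<in> X \<Longrightarrow> (x, x) \<in> le"
    and cframe_trans: "(x, y) \<in> le \<Longrightarrow> (y, z) \<in> le \<Longrightarrow> (x, z) \<in> le"
    and cframe_R_subset: "upset X le a \<Longrightarrow> Rs a \<subseteq> X \<times> X"
    and cframe_le_R: "upset X le a \<Longrightarrow> le O Rs a \<subseteq> Rs a O le"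
  using assms unfolding cframe_def refl_on_def trans_def by blast+

abbreviation truth_set :: "'w set \<Rightarrow> 'w rel \<Rightarrow> ('w set \<Rightarrow> 'w rel) \<Rightarrow> (nat \<Rightarrow> 'w set) \<Rightarrow> fm \<Rightarrow> 'w set"
  where "truth_set X le Rs V \<phi> \<equiv> {z \<in> X. sat X le Rs V z \<phi>}"

lemma sat_persistent:
  assumes cf: "cframe X le Rs" and V: "valuation X le V"
  shows "(x, y) \<in> le \<Longrightarrow> sat X le Rs V x \<phi> \<Longrightarrow> sat X le Rs V y \<phi>"
proof (induction \<phi> arbitrary: x y)
  case (Var n)
  then show ?case
    using V cframe_le_subset[OF cf] unfolding valuation_def upset_def by auto
next
  case (Imp a b)
  then show ?case using cframe_trans[OF cf] by auto
next
  case (Cond a b)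
  let ?A = "truth_set X le Rs V a"
  have "upset X le ?A"
    using Cond.IH(1) cframe_le_subset[OF cf] unfolding upset_def by blast
  then have R: "Rs ?A \<subseteq> X \<times> X" "le O Rs ?A \<subseteq> Rs ?A O le"
    using cframe_R_subset[OF cf] cframe_le_R[OF cf] by auto
  show ?case
  proof (simp only: sat.simps, intro allI impI)
    fix u assume "(y, u) \<in> Rs ?A"
    then obtain v where "(x, v) \<in> Rs ?A" "(v, u) \<in> le"
      using Cond.prems(1) R(2) by blast
    then show "sat X le Rs V u b" using Cond.prems(2) Cond.IH(2) by auto
  qed
qed auto

lemma upset_truth_set:
  assumes "cframe X le Rs" and "valuation X le V"
  shows "upset X le (truth_set X le Rs V \<phi>)"
  using sat_persistent[OF assms] cframe_le_subset[OF assms(1)] unfolding upset_def by blast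

lemma sat_subst:
  assumes cf: "cframe X le Rs" and V: "valuation X le V"
  shows "x \<in> X \<Longrightarrow> sat X le Rs V x (subst \<sigma> \<phi>) \<longleftrightarrow>
    sat X le Rs (\<lambda>n. truth_set X le Rs V (\<sigma> n)) x \<phi>"
proof (induction \<phi> arbitrary: x)
  case (Cond a b)
  have "truth_set X le Rs V (subst \<sigma> a) = truth_set X le Rs (\<lambda>n. truth_set X le Rs V (\<sigma> n)) a"
    using Cond.IH(1) by blast
  moreover have "Rs (truth_set X le Rs V (subst \<sigma> a)) \<subseteq> X \<times> X"
    using cframe_R_subset[OF cf upset_truth_set[OF cf V]] .
  ultimately show ?case using Cond.IH(2) by (simp only: subst.simps sat.simps) blast
qed auto

lemma sat_IPC_axiom:
  assumes cf: "cframe X le Rs" and V: "valuation X le V"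
    and "x \<in> X" and "\<phi> \<in> IPC_axioms"
  shows "sat X le Rs V x \<phi>"
proof -
  note order = cframe_trans[OF cf] cframe_refl[OF cf] cframe_le_subset[OF cf]
  have mono: "(y, z) \<in> le \<Longrightarrow> y \<in> V n \<Longrightarrow> z \<in> V n" for y z n
    using sat_persistent[OF cf V, of y z "Var n"] by simp
  from assms(4) show ?thesis
    unfolding IPC_axioms_def by (auto intro: mono) (meson order mono)+
qed

lemma valid_frame_subst:
  assumes cf: "cframe X le Rs" and "valid_frame X le Rs \<phi>"
  shows "valid_frame X le Rs (subst \<sigma> \<phi>)"
  unfolding valid_frame_def
proof (intro allI impI ballI)
  fix V x assume V: "valuation X le V" and "x \<in> X"
  have "valuation X le (\<lambda>n. truth_set X le Rs V (\<sigma> n))"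
    unfolding valuation_def using upset_truth_set[OF cf V] by blast
  then have "sat X le Rs (\<lambda>n. truth_set X le Rs V (\<sigma> n)) x \<phi>"
    using assms(2) \<open>x \<in> X\<close> unfolding valid_frame_def by blast
  then show "sat X le Rs V x (subst \<sigma> \<phi>)"
    using sat_subst[OF cf V \<open>x \<in> X\<close>] by blast
qed

lemma valid_frame_Iff:
  assumes cf: "cframe X le Rs"
  shows "valid_frame X le Rs (Iff \<phi> \<psi>) \<longleftrightarrow>
    (\<forall>V. valuation X le V \<longrightarrow> truth_set X le Rs V \<phi> = truth_set X le Rs V \<psi>)"
proof
  assume "valid_frame X le Rs (Iff \<phi> \<psi>)"
  then show "\<forall>V. valuation X le V \<longrightarrow> truth_set X le Rs V \<phi> = truth_set X le Rs V \<psi>"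
    using cframe_refl[OF cf] unfolding valid_frame_def Iff_def by auto
next
  assume "\<forall>V. valuation X le V \<longrightarrow> truth_set X le Rs V \<phi> = truth_set X le Rs V \<psi>"
  then show "valid_frame X le Rs (Iff \<phi> \<psi>)"
    unfolding valid_frame_def Iff_def set_eq_iff by (simp only: sat.simps) blast
qed

theorem ICK_ext_sound:
  assumes cf: "cframe X le Rs" and \<Gamma>: "\<forall>\<gamma>\<in>\<Gamma>. valid_frame X le Rs \<gamma>"
  shows "\<phi> \<in> ICK_ext \<Gamma> \<Longrightarrow> valid_frame X le Rs \<phi>"
proof (induction rule: ICK_ext.induct)
  case (ax_ipc \<phi>)
  then show ?case using sat_IPC_axiom[OF cf] unfolding valid_frame_def by blast
next
  case (ax_gamma \<phi>)
  then show ?case using \<Gamma> by blast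
next
  case (ax_ick \<phi>)
  then show ?case unfolding ICK_axioms_def valid_frame_def Iff_def Top_def by auto
next
  case (us \<phi> \<sigma>)
  then show ?case using valid_frame_subst[OF cf] by blast
next
  case (mp \<phi> \<psi>)
  then show ?case using cframe_refl[OF cf] unfolding valid_frame_def by auto
next
  case (cong_l \<phi> \<psi> \<chi>)
  then show ?case unfolding valid_frame_Iff[OF cf] by simp
next
  case (cong_r \<phi> \<psi> \<chi>)
  show ?case unfolding valid_frame_Iff[OF cf]
  proof (intro allI impI)
    fix V assume V: "valuation X le V"
    then have "truth_set X le Rs V \<phi> = truth_set X le Rs V \<psi>"
      using cong_r.IH unfolding valid_frame_Iff[OF cf] by blast
    moreover have "Rs (truth_set X le Rs V \<chi>) \<subseteq> X \<times> X"
      using cframe_R_subset[OF cf upset_truth_set[OF cf V]] .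
    ultimately show "truth_set X le Rs V (Cond \<chi> \<phi>) = truth_set X le Rs V (Cond \<chi> \<psi>)"
      by (auto simp: set_eq_iff)
  qed
qed

definition L511_axioms :: "fm set" where
  "L511_axioms = {Cond P P, Imp (And (Cond P Q) (Cond Q R)) (Cond P R), Imp (Imp P Q) (Cond P Q)}"

lemma L511_eq_ICK_ext: "L511 = ICK_ext L511_axioms"
  unfolding L511_def L511_axioms_def ..

lemma frame511D:
  assumes "frame511 X le Rs" and "x \<in> X" and "upset X le a"
  shows frame511_R_up: "(x, y) \<in> Rs a \<Longrightarrow> (x, y) \<in> le \<and> y \<in> a"
    and frame511_R_subset: "upset X le b \<Longrightarrow> Rs a `` {x} \<subseteq> b \<Longrightarrow>
      (x, y) \<in> Rs a \<Longrightarrow> \<exists>z. (x, z) \<in> Rs b \<and> (z, y) \<in> le"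
  using assms unfolding frame511_def up_def by blast+

lemma frame511_sat_L511_axioms:
  assumes fr: "frame511 X le Rs" and V: "valuation X le V" and x: "x \<in> X"
  shows "sat X le Rs V x (Cond P P)"
    and "sat X le Rs V x (Imp (Imp P Q) (Cond P Q))"
    and "sat X le Rs V x (Imp (And (Cond P Q) (Cond Q R)) (Cond P R))"
proof -
  have cf: "cframe X le Rs" using fr unfolding frame511_def by blast
  note upsets = upset_truth_set[OF cf V]
  note R_up = frame511_R_up[OF fr _ upsets]
  show "sat X le Rs V x (Cond P P)"
  proof (simp only: sat.simps(6), intro allI impI)
    fix y assume "(x, y) \<in> Rs (truth_set X le Rs V P)"
    then show "sat X le Rs V y P" using R_up[OF x] by blast
  qed
  show "sat X le Rs V x (Imp (Imp P Q) (Cond P Q))"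
  proof (simp only: sat.simps(5,6), intro ballI impI allI)
    fix y u assume "y \<in> X"
      and PQ: "\<forall>z\<in>X. (y, z) \<in> le \<longrightarrow> sat X le Rs V z P \<longrightarrow> sat X le Rs V z Q"
      and "(y, u) \<in> Rs (truth_set X le Rs V P)"
    then have "(y, u) \<in> le" "u \<in> truth_set X le Rs V P" using R_up by blast+
    then show "sat X le Rs V u Q" using PQ by blast
  qed
  show "sat X le Rs V x (Imp (And (Cond P Q) (Cond Q R)) (Cond P R))"
  proof (simp only: sat.simps(3,5,6), intro ballI impI allI, elim conjE)
    fix y u assume y: "y \<in> X"
      and PQ: "\<forall>u. (y, u) \<in> Rs (truth_set X le Rs V P) \<longrightarrow> sat X le Rs V u Q"
      and QR: "\<forall>u. (y, u) \<in> Rs (truth_set X le Rs V Q) \<longrightarrow> sat X le Rs V u R"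
      and yu: "(y, u) \<in> Rs (truth_set X le Rs V P)"
    have "Rs (truth_set X le Rs V P) `` {y} \<subseteq> truth_set X le Rs V Q"
      using PQ cframe_R_subset[OF cf upsets] by blast
    then obtain z where "(y, z) \<in> Rs (truth_set X le Rs V Q)" "(z, u) \<in> le"
      using frame511_R_subset[OF fr y upsets upsets _ yu] by blast
    then show "sat X le Rs V u R" using QR sat_persistent[OF cf V] by blast
  qed
qed

theorem L511_sound:
  assumes "\<phi> \<in> L511" and fr: "frame511 X le Rs"
  shows "valid_frame X le Rs \<phi>"
proof -
  have "\<forall>\<gamma>\<in>L511_axioms. valid_frame X le Rs \<gamma>"
    using frame511_sat_L511_axioms[OF fr] unfolding L511_axioms_def valid_frame_def by blast
  moreover have "cframe X le Rs" using fr unfolding frame511_def by blast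
  ultimately show ?thesis
    using ICK_ext_sound assms(1) unfolding L511_eq_ICK_ext by blast
qed

section \<open>Derivable formulas\<close>

lemma ICK_ext_IPC_instance:
  "\<phi> \<in> IPC_axioms \<Longrightarrow> subst (\<lambda>n. [a, b, c] ! n) \<phi> \<in> ICK_ext \<Gamma>"
  by (intro ICK_ext.us ICK_ext.ax_ipc)

lemma ICK_ext_K: "Imp a (Imp b a) \<in> ICK_ext \<Gamma>"
  using ICK_ext_IPC_instance[of "Imp P (Imp Q P)" a b c] unfolding IPC_axioms_def by simp

lemma ICK_ext_S: "Imp (Imp a (Imp b c)) (Imp (Imp a b) (Imp a c)) \<in> ICK_ext \<Gamma>"
  using ICK_ext_IPC_instance[of "Imp (Imp P (Imp Q R)) (Imp (Imp P Q) (Imp P R))" a b c] unfolding IPC_axioms_def by simp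

lemma ICK_ext_conjunct1: "Imp (And a b) a \<in> ICK_ext \<Gamma>"
  using ICK_ext_IPC_instance[of "Imp (And P Q) P" a b c] unfolding IPC_axioms_def by simp

lemma ICK_ext_conjunct2: "Imp (And a b) b \<in> ICK_ext \<Gamma>"
  using ICK_ext_IPC_instance[of "Imp (And P Q) Q" a b c] unfolding IPC_axioms_def by simp

lemma ICK_ext_conjI: "Imp a (Imp b (And a b)) \<in> ICK_ext \<Gamma>"
  using ICK_ext_IPC_instance[of "Imp P (Imp Q (And P Q))" a b c] unfolding IPC_axioms_def by simp

lemma ICK_ext_disjI1: "Imp a (Or a b) \<in> ICK_ext \<Gamma>"
  using ICK_ext_IPC_instance[of "Imp P (Or P Q)" a b c] unfolding IPC_axioms_def by simp

lemma ICK_ext_disjI2: "Imp b (Or a b) \<in> ICK_ext \<Gamma>"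
  using ICK_ext_IPC_instance[of "Imp Q (Or P Q)" a b c] unfolding IPC_axioms_def by simp

lemma ICK_ext_disjE: "Imp (Imp a c) (Imp (Imp b c) (Imp (Or a b) c)) \<in> ICK_ext \<Gamma>"
  using ICK_ext_IPC_instance[of "Imp (Imp P R) (Imp (Imp Q R) (Imp (Or P Q) R))" a b c] unfolding IPC_axioms_def by simp

lemma ICK_ext_Bot_E: "Imp Bot a \<in> ICK_ext \<Gamma>"
  using ICK_ext_IPC_instance[of "Imp Bot P" a b c] unfolding IPC_axioms_def by simp

lemma ICK_ext_Imp_refl: "Imp a a \<in> ICK_ext \<Gamma>"
  using ICK_ext.mp[OF ICK_ext.mp[OF ICK_ext_S[of a "Imp a a" a] ICK_ext_K] ICK_ext_K] .

lemma ICK_ext_mp_And: "Imp (And (Imp a b) a) b \<in> ICK_ext \<Gamma>"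
  using ICK_ext.mp[OF ICK_ext.mp[OF ICK_ext_S ICK_ext_conjunct1] ICK_ext_conjunct2] .

lemma ICK_ext_Cond_And: "Imp (And (Cond a b) (Cond a c)) (Cond a (And b c)) \<in> ICK_ext \<Gamma>"
proof -
  have "Iff (Cond a (And b c)) (And (Cond a b) (Cond a c)) \<in> ICK_ext \<Gamma>"
    using ICK_ext.us[OF ICK_ext.ax_ick, of "Iff (Cond P (And Q R)) (And (Cond P Q) (Cond P R))"
        "\<lambda>n. [a, b, c] ! n"]
    unfolding ICK_axioms_def by (simp add: Iff_def)
  then show ?thesis
    unfolding Iff_def by (rule ICK_ext.mp[OF ICK_ext_conjunct2])
qed

lemma L511_axiom_instance:
  "\<phi> \<in> L511_axioms \<Longrightarrow> subst (\<lambda>n. [a, b, c] ! n) \<phi> \<in> ICK_ext L511_axioms"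
  by (intro ICK_ext.us ICK_ext.ax_gamma)

lemma L511_Cond_refl: "Cond a a \<in> ICK_ext L511_axioms"
  using L511_axiom_instance[of "Cond P P" a b c] unfolding L511_axioms_def by simp

lemma L511_Cond_trans: "Imp (And (Cond a b) (Cond b c)) (Cond a c) \<in> ICK_ext L511_axioms"
  using L511_axiom_instance[of "Imp (And (Cond P Q) (Cond Q R)) (Cond P R)" a b c] unfolding L511_axioms_def by simp

lemma L511_Imp_Cond: "Imp (Imp a b) (Cond a b) \<in> ICK_ext L511_axioms"
  using L511_axiom_instance[of "Imp (Imp P Q) (Cond P Q)" a b c] unfolding L511_axioms_def by simp

section \<open>Theories and prime theories\<close>

definition ick_theory :: "fm set \<Rightarrow> fm set \<Rightarrow> bool" where
  "ick_theory \<Gamma> T \<longleftrightarrow> ICK_ext \<Gamma> \<subseteq> T \<and> (\<forall>a b. Imp a b \<in> T \<longrightarrow> a \<in> T \<longrightarrow> b \<in> T)"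

definition prime_theory :: "fm set \<Rightarrow> fm set \<Rightarrow> bool" where
  "prime_theory \<Gamma> T \<longleftrightarrow>
     ick_theory \<Gamma> T \<and> Bot \<notin> T \<and> (\<forall>a b. Or a b \<in> T \<longrightarrow> a \<in> T \<or> b \<in> T)"

lemma ick_theory_ICK_ext: "ick_theory \<Gamma> (ICK_ext \<Gamma>)"
  unfolding ick_theory_def using ICK_ext.mp by blast

lemma ick_theoryD:
  assumes "ick_theory \<Gamma> T"
  shows ick_theory_derivable: "a \<in> ICK_ext \<Gamma> \<Longrightarrow> a \<in> T"
    and ick_theory_mp: "Imp a b \<in> T \<Longrightarrow> a \<in> T \<Longrightarrow> b \<in> T"
  using assms unfolding ick_theory_def by blast+

lemma ick_theory_derivable_mp:
  "ick_theory \<Gamma> T \<Longrightarrow> Imp a b \<in> ICK_ext \<Gamma> \<Longrightarrow> a \<in> T \<Longrightarrow> b \<in> T"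
  by (blast intro: ick_theory_mp ick_theory_derivable)

lemma ick_theory_And_iff: "ick_theory \<Gamma> T \<Longrightarrow> And a b \<in> T \<longleftrightarrow> a \<in> T \<and> b \<in> T"
  by (meson ick_theory_derivable_mp ick_theory_mp ICK_ext_conjunct1 ICK_ext_conjunct2 ICK_ext_conjI)

lemma ick_theory_Imp_const: "ick_theory \<Gamma> T \<Longrightarrow> a \<in> T \<Longrightarrow> Imp c a \<in> T"
  using ick_theory_derivable_mp ICK_ext_K by blast

lemma ick_theory_Imp_set: "ick_theory \<Gamma> T \<Longrightarrow> ick_theory \<Gamma> {c. Imp a c \<in> T}"
  unfolding ick_theory_def[of _ "{c. Imp a c \<in> T}"]
proof (intro conjI subsetI allI impI; simp)
  assume T: "ick_theory \<Gamma> T"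
  show "c \<in> ICK_ext \<Gamma> \<Longrightarrow> Imp a c \<in> T" for c
    using T ick_theory_derivable ick_theory_Imp_const by blast
  show "Imp a (Imp b c) \<in> T \<Longrightarrow> Imp a b \<in> T \<Longrightarrow> Imp a c \<in> T" for b c
    using T ick_theory_derivable_mp[OF T ICK_ext_S] ick_theory_mp by blast
qed

lemma ick_theory_Union_chain:
  assumes "C \<noteq> {}" and "\<forall>T\<in>C. ick_theory \<Gamma> T" and "\<forall>S\<in>C. \<forall>T\<in>C. S \<subseteq> T \<or> T \<subseteq> S"
  shows "ick_theory \<Gamma> (\<Union>C)"
  unfolding ick_theory_def
proof (intro conjI allI impI)
  show "ICK_ext \<Gamma> \<subseteq> \<Union>C" using assms(1,2) unfolding ick_theory_def by blast
next
  fix a b assume "Imp a b \<in> \<Union>C" and "a \<in> \<Union>C"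
  then obtain T where "T \<in> C" "Imp a b \<in> T" "a \<in> T" using assms(3) by blast
  then show "b \<in> \<Union>C" using assms(2) ick_theory_mp by blast
qed

lemma prime_theory_extension:
  assumes T: "ick_theory \<Gamma> T" and "\<psi> \<notin> T"
  obtains M where "prime_theory \<Gamma> M" and "T \<subseteq> M" and "\<psi> \<notin> M"
proof -
  define A where "A = {M. ick_theory \<Gamma> M \<and> T \<subseteq> M \<and> \<psi> \<notin> M}"
  have "\<exists>M\<in>A. \<forall>N\<in>A. M \<subseteq> N \<longrightarrow> N = M"
  proof (rule subset_Zorn_nonempty)
    show "A \<noteq> {}" using assms unfolding A_def by blast
    fix C assume "C \<noteq> {}" and "subset.chain A C"
    then show "\<Union>C \<in> A"
      using ick_theory_Union_chain[of C \<Gamma>] unfolding A_def subset.chain_def by blast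
  qed
  then obtain M where "M \<in> A" and max: "\<forall>N\<in>A. M \<subseteq> N \<longrightarrow> N = M" ..
  then have M: "ick_theory \<Gamma> M" "T \<subseteq> M" "\<psi> \<notin> M" unfolding A_def by simp_all
  have maximal: "N = M" if "ick_theory \<Gamma> N" "M \<subseteq> N" "\<psi> \<notin> N" for N
    using max that M(2) unfolding A_def by blast
  have Imp_\<psi>: "Imp a \<psi> \<in> M" if "a \<notin> M" for a
  proof (rule ccontr)
    assume "Imp a \<psi> \<notin> M"
    moreover have "M \<subseteq> {c. Imp a c \<in> M}" using ick_theory_Imp_const[OF M(1)] by blast
    ultimately have "{c. Imp a c \<in> M} = M"
      using maximal ick_theory_Imp_set[OF M(1)] by blast
    moreover have "a \<in> {c. Imp a c \<in> M}"
      using ick_theory_derivable[OF M(1) ICK_ext_Imp_refl] by simp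
    ultimately show False using that by blast
  qed
  have "Bot \<notin> M"
    using M(3) ick_theory_derivable_mp[OF M(1) ICK_ext_Bot_E] by blast
  moreover have "a \<in> M \<or> b \<in> M" if "Or a b \<in> M" for a b
  proof (rule ccontr)
    assume "\<not> (a \<in> M \<or> b \<in> M)"
    then have "Imp (Or a b) \<psi> \<in> M"
      using ick_theory_derivable_mp[OF M(1) ICK_ext_disjE] Imp_\<psi> ick_theory_mp[OF M(1)] by meson
    then show False using that M(3) ick_theory_mp[OF M(1)] by blast
  qed
  ultimately have "prime_theory \<Gamma> M" unfolding prime_theory_def using M(1) by blast
  then show thesis using M(2,3) by (rule that)
qed

lemma ick_theory_mem_iff_prime_extensions:
  assumes "ick_theory \<Gamma> T"
  shows "a \<in> T \<longleftrightarrow> (\<forall>M. prime_theory \<Gamma> M \<longrightarrow> T \<subseteq> M \<longrightarrow> a \<in> M)"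
  using prime_theory_extension[OF assms] by blast

lemma prime_theory_Or_iff: "prime_theory \<Gamma> T \<Longrightarrow> Or a b \<in> T \<longleftrightarrow> a \<in> T \<or> b \<in> T"
  unfolding prime_theory_def
  using ick_theory_derivable_mp ICK_ext_disjI1 ICK_ext_disjI2 by blast

definition cond_succ :: "fm set \<Rightarrow> fm \<Rightarrow> fm set" where
  "cond_succ T a = {c. Cond a c \<in> T}"

lemma cond_succ_self: "ick_theory L511_axioms T \<Longrightarrow> a \<in> cond_succ T a"
  unfolding cond_succ_def using ick_theory_derivable L511_Cond_refl by blast

lemma subset_cond_succ: "ick_theory L511_axioms T \<Longrightarrow> T \<subseteq> cond_succ T a"
  unfolding cond_succ_def
  using ick_theory_Imp_const ick_theory_derivable_mp L511_Imp_Cond by blast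

lemma cond_succ_trans:
  assumes T: "ick_theory L511_axioms T" and "b \<in> cond_succ T a"
  shows "cond_succ T b \<subseteq> cond_succ T a"
proof
  fix c assume "c \<in> cond_succ T b"
  then have "And (Cond a b) (Cond b c) \<in> T"
    using assms(2) ick_theory_And_iff[OF T] unfolding cond_succ_def by blast
  then show "c \<in> cond_succ T a"
    using ick_theory_derivable_mp[OF T L511_Cond_trans] unfolding cond_succ_def by blast
qed

lemma ick_theory_cond_succ:
  assumes T: "ick_theory L511_axioms T"
  shows "ick_theory L511_axioms (cond_succ T a)"
  unfolding ick_theory_def
proof (intro conjI subsetI allI impI)
  fix c assume "c \<in> ICK_ext L511_axioms"
  then have "Cond a c \<in> ICK_ext L511_axioms"
    using ICK_ext.mp[OF L511_Imp_Cond] ICK_ext.mp[OF ICK_ext_K] by blast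
  then show "c \<in> cond_succ T a" unfolding cond_succ_def using ick_theory_derivable[OF T] by blast
next
  fix b c assume "Imp b c \<in> cond_succ T a" and "b \<in> cond_succ T a"
  then have "And (Cond a (Imp b c)) (Cond a b) \<in> T"
    using ick_theory_And_iff[OF T] unfolding cond_succ_def by blast
  then have "And (Imp b c) b \<in> cond_succ T a"
    using ick_theory_derivable_mp[OF T ICK_ext_Cond_And] unfolding cond_succ_def by blast
  moreover have "Cond (And (Imp b c) b) c \<in> T"
    using ick_theory_derivable_mp[OF T L511_Imp_Cond ick_theory_derivable[OF T ICK_ext_mp_And]] .
  ultimately show "c \<in> cond_succ T a"
    using cond_succ_trans[OF T] unfolding cond_succ_def by blast
qed

section \<open>The canonical model\<close>

definition canon_worlds :: "fm set set" where
  "canon_worlds = {T. prime_theory L511_axioms T}"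

definition canon_le :: "fm set rel" where
  "canon_le = {(x, y). x \<in> canon_worlds \<and> y \<in> canon_worlds \<and> x \<subseteq> y}"

definition canon_R :: "fm set set \<Rightarrow> fm set rel" where
  "canon_R A = {(x, y). x \<in> canon_worlds \<and> y \<in> canon_worlds \<and>
     (\<exists>w\<in>canon_worlds. \<exists>\<phi>. x \<subseteq> w \<and> cond_succ w \<phi> \<subseteq> y \<and>
        (\<forall>z\<in>canon_worlds. cond_succ w \<phi> \<subseteq> z \<longrightarrow> z \<in> A))}"

definition canon_V :: "nat \<Rightarrow> fm set set" where
  "canon_V n = {x \<in> canon_worlds. Var n \<in> x}"

abbreviation canon_sat :: "fm set \<Rightarrow> fm \<Rightarrow> bool" where
  "canon_sat \<equiv> sat canon_worlds canon_le canon_R canon_V"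

lemma canon_worlds_theory: "x \<in> canon_worlds \<Longrightarrow> ick_theory L511_axioms x"
  unfolding canon_worlds_def prime_theory_def by blast

lemma canon_worlds_prime_extension:
  assumes "ick_theory L511_axioms T" and "\<psi> \<notin> T"
  obtains y where "y \<in> canon_worlds" and "T \<subseteq> y" and "\<psi> \<notin> y"
  using prime_theory_extension[OF assms] unfolding canon_worlds_def by blast

lemma canon_R_subset: "canon_R A \<subseteq> canon_worlds \<times> canon_worlds"
  unfolding canon_R_def by blast

lemma canon_RI:
  "x \<in> canon_worlds \<Longrightarrow> y \<in> canon_worlds \<Longrightarrow> w \<in> canon_worlds \<Longrightarrow> x \<subseteq> w \<Longrightarrow>
   cond_succ w \<phi> \<subseteq> y \<Longrightarrow> (\<forall>z\<in>canon_worlds. cond_succ w \<phi> \<subseteq> z \<longrightarrow> z \<in> A) \<Longrightarrow>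
   (x, y) \<in> canon_R A"
  unfolding canon_R_def by blast

lemma canon_RE:
  assumes "(x, y) \<in> canon_R A"
  obtains w \<phi> where "x \<in> canon_worlds" "y \<in> canon_worlds" "w \<in> canon_worlds" "x \<subseteq> w"
    "cond_succ w \<phi> \<subseteq> y" "\<forall>z\<in>canon_worlds. cond_succ w \<phi> \<subseteq> z \<longrightarrow> z \<in> A"
  using assms unfolding canon_R_def by blast

lemma canon_sat_Imp:
  assumes IH: "\<And>y. y \<in> canon_worlds \<Longrightarrow> canon_sat y a \<longleftrightarrow> a \<in> y"
    "\<And>y. y \<in> canon_worlds \<Longrightarrow> canon_sat y b \<longleftrightarrow> b \<in> y"
    and x: "x \<in> canon_worlds"
  shows "canon_sat x (Imp a b) \<longleftrightarrow> Imp a b \<in> x"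
proof
  have T: "ick_theory L511_axioms x" using canon_worlds_theory[OF x] .
  assume sat: "canon_sat x (Imp a b)"
  show "Imp a b \<in> x"
  proof (rule ccontr)
    assume "Imp a b \<notin> x"
    then obtain y where y: "y \<in> canon_worlds" "{c. Imp a c \<in> x} \<subseteq> y" "b \<notin> y"
      using canon_worlds_prime_extension[OF ick_theory_Imp_set[OF T]] by blast
    moreover have "(x, y) \<in> canon_le"
      using y ick_theory_Imp_const[OF T] x unfolding canon_le_def by blast
    moreover have "a \<in> y" using y(2) ick_theory_derivable[OF T ICK_ext_Imp_refl] by blast
    ultimately show False using sat IH by auto
  qed
next
  assume ab: "Imp a b \<in> x"
  show "canon_sat x (Imp a b)"
  proof (simp only: sat.simps, intro ballI impI)
    fix y assume y: "y \<in> canon_worlds" and "(x, y) \<in> canon_le" and "canon_sat y a"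
    then have "Imp a b \<in> y" and "a \<in> y" using ab IH(1) unfolding canon_le_def by auto
    then show "canon_sat y b" using IH(2)[OF y] ick_theory_mp[OF canon_worlds_theory[OF y]] by blast
  qed
qed

lemma canon_sat_Cond:
  assumes IH: "\<And>y. y \<in> canon_worlds \<Longrightarrow> canon_sat y a \<longleftrightarrow> a \<in> y"
    "\<And>y. y \<in> canon_worlds \<Longrightarrow> canon_sat y b \<longleftrightarrow> b \<in> y"
    and x: "x \<in> canon_worlds"
  shows "canon_sat x (Cond a b) \<longleftrightarrow> Cond a b \<in> x"
proof -
  have T: "ick_theory L511_axioms x" using canon_worlds_theory[OF x] .
  have A: "{z \<in> canon_worlds. canon_sat z a} = {z \<in> canon_worlds. a \<in> z}" using IH(1) by blast
  have "canon_sat x (Cond a b) \<longleftrightarrow>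
      (\<forall>y. (x, y) \<in> canon_R {z \<in> canon_worlds. a \<in> z} \<longrightarrow> canon_sat y b)"
    by (simp only: sat.simps A)
  also have "\<dots> \<longleftrightarrow> (\<forall>y. (x, y) \<in> canon_R {z \<in> canon_worlds. a \<in> z} \<longrightarrow> b \<in> y)"
    using IH(2) canon_R_subset by blast
  also have "\<dots> \<longleftrightarrow> Cond a b \<in> x"
  proof
    assume sat: "\<forall>y. (x, y) \<in> canon_R {z \<in> canon_worlds. a \<in> z} \<longrightarrow> b \<in> y"
    show "Cond a b \<in> x"
    proof (rule ccontr)
      assume "Cond a b \<notin> x"
      then have "b \<notin> cond_succ x a" unfolding cond_succ_def by simp
      then obtain y where y: "y \<in> canon_worlds" "cond_succ x a \<subseteq> y" "b \<notin> y"
        by (rule canon_worlds_prime_extension[OF ick_theory_cond_succ[OF T]])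
      have "\<forall>z\<in>canon_worlds. cond_succ x a \<subseteq> z \<longrightarrow> z \<in> {z \<in> canon_worlds. a \<in> z}"
        using cond_succ_self[OF T] by blast
      then have "(x, y) \<in> canon_R {z \<in> canon_worlds. a \<in> z}"
        by (rule canon_RI[OF x y(1) x order_refl y(2)])
      then show False using sat y(3) by blast
    qed
  next
    assume ab: "Cond a b \<in> x"
    show "\<forall>y. (x, y) \<in> canon_R {z \<in> canon_worlds. a \<in> z} \<longrightarrow> b \<in> y"
    proof (intro allI impI)
      fix y assume "(x, y) \<in> canon_R {z \<in> canon_worlds. a \<in> z}"
      then obtain w \<phi> where w: "w \<in> canon_worlds" "x \<subseteq> w" "cond_succ w \<phi> \<subseteq> y"
        and all: "\<forall>z\<in>canon_worlds. cond_succ w \<phi> \<subseteq> z \<longrightarrow> a \<in> z"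
        by (auto elim: canon_RE)
      have W: "ick_theory L511_axioms w" using canon_worlds_theory[OF w(1)] .
      have "a \<in> cond_succ w \<phi>"
        unfolding ick_theory_mem_iff_prime_extensions[OF ick_theory_cond_succ[OF W]]
        using all unfolding canon_worlds_def by simp
      moreover have "b \<in> cond_succ w a" using ab w(2) unfolding cond_succ_def by blast
      ultimately show "b \<in> y" using cond_succ_trans[OF W] w(3) by blast
    qed
  qed
  finally show ?thesis .
qed

lemma canon_truth: "x \<in> canon_worlds \<Longrightarrow> canon_sat x \<phi> \<longleftrightarrow> \<phi> \<in> x"
proof (induction \<phi> arbitrary: x)
  case (Var n)
  then show ?case unfolding canon_V_def by simp
next
  case Bot
  then show ?case unfolding canon_worlds_def prime_theory_def by simp
next
  case (And a b)
  then show ?case using ick_theory_And_iff[OF canon_worlds_theory] by simp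
next
  case (Or a b)
  then show ?case using prime_theory_Or_iff unfolding canon_worlds_def by simp
next
  case (Imp a b)
  then show ?case using canon_sat_Imp by blast
next
  case (Cond a b)
  then show ?case using canon_sat_Cond by blast
qed

lemma canon_R_le: "(x, y) \<in> canon_R A \<Longrightarrow> (x, y) \<in> canon_le \<and> y \<in> A"
proof (elim canon_RE)
  fix w \<phi> assume "x \<in> canon_worlds" "y \<in> canon_worlds" "w \<in> canon_worlds" "x \<subseteq> w"
    and "cond_succ w \<phi> \<subseteq> y" and "\<forall>z\<in>canon_worlds. cond_succ w \<phi> \<subseteq> z \<longrightarrow> z \<in> A"
  moreover have "w \<subseteq> cond_succ w \<phi>"
    using subset_cond_succ canon_worlds_theory \<open>w \<in> canon_worlds\<close> by blast
  ultimately show "(x, y) \<in> canon_le \<and> y \<in> A" unfolding canon_le_def by blast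
qed

lemma canon_le_R:
  assumes "(x, x') \<in> canon_le" and "(x', y) \<in> canon_R A"
  shows "(x, y) \<in> canon_R A"
  using assms(2)
proof (rule canon_RE)
  fix w \<phi> assume y: "y \<in> canon_worlds" and w: "w \<in> canon_worlds" "x' \<subseteq> w"
    and "cond_succ w \<phi> \<subseteq> y" "\<forall>z\<in>canon_worlds. cond_succ w \<phi> \<subseteq> z \<longrightarrow> z \<in> A"
  moreover have "x \<in> canon_worlds" "x \<subseteq> w" using assms(1) w(2) unfolding canon_le_def by auto
  ultimately show ?thesis using canon_RI by blast
qed

lemma canon_R_Image_subset:
  assumes "canon_R A `` {x} \<subseteq> B"
  shows "canon_R A `` {x} \<subseteq> canon_R B `` {x}"
proof
  fix y assume "y \<in> canon_R A `` {x}"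
  then have "(x, y) \<in> canon_R A" by simp
  then obtain w \<phi> where w: "x \<in> canon_worlds" "y \<in> canon_worlds" "w \<in> canon_worlds" "x \<subseteq> w"
    "cond_succ w \<phi> \<subseteq> y" and A: "\<forall>z\<in>canon_worlds. cond_succ w \<phi> \<subseteq> z \<longrightarrow> z \<in> A"
    by (rule canon_RE)
  have "z \<in> B" if "z \<in> canon_worlds" "cond_succ w \<phi> \<subseteq> z" for z
    using canon_RI[OF w(1) that(1) w(3,4) that(2) A] assms by blast
  then have "(x, y) \<in> canon_R B" using canon_RI[OF w] by blast
  then show "y \<in> canon_R B `` {x}" by simp
qed

lemma canon_cframe:
  assumes "canon_worlds \<noteq> {}"
  shows "cframe canon_worlds canon_le canon_R"
  unfolding cframe_def
proof (intro conjI allI impI)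
  show "refl_on canon_worlds canon_le" "trans canon_le"
    unfolding canon_le_def refl_on_def trans_def by auto
  fix A
  show "canon_le O canon_R A \<subseteq> canon_R A O canon_le"
    using canon_le_R canon_R_le canon_R_subset unfolding canon_le_def by blast
qed (use assms canon_R_subset in \<open>auto simp: canon_le_def\<close>)

lemma canon_frame511:
  assumes "canon_worlds \<noteq> {}"
  shows "frame511 canon_worlds canon_le canon_R"
  unfolding frame511_def
proof (intro conjI ballI allI impI)
  show "cframe canon_worlds canon_le canon_R" using canon_cframe[OF assms] .
  fix x A
  show "canon_R A `` {x} \<subseteq> up canon_worlds canon_le {x} \<inter> A"
  proof
    fix y assume "y \<in> canon_R A `` {x}"
    then have "(x, y) \<in> canon_le" "y \<in> A" using canon_R_le by auto
    then show "y \<in> up canon_worlds canon_le {x} \<inter> A"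
      unfolding up_def canon_le_def by blast
  qed
  fix B assume "canon_R A `` {x} \<subseteq> B"
  then have "canon_R A `` {x} \<subseteq> canon_R B `` {x}" by (rule canon_R_Image_subset)
  moreover have "canon_R B `` {x} \<subseteq> up canon_worlds canon_le (canon_R B `` {x})"
    using canon_R_subset unfolding up_def canon_le_def by blast
  ultimately show "canon_R A `` {x} \<subseteq> up canon_worlds canon_le (canon_R B `` {x})" by blast
qed

theorem L511_complete:
  assumes "valid511 TYPE(fm set) \<phi>"
  shows "\<phi> \<in> L511"
proof (rule ccontr)
  assume "\<phi> \<notin> L511"
  then obtain M where M: "M \<in> canon_worlds" "\<phi> \<notin> M"
    using canon_worlds_prime_extension[OF ick_theory_ICK_ext] unfolding L511_eq_ICK_ext by blast
  then have "frame511 canon_worlds canon_le canon_R" using canon_frame511 by blast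
  moreover have "valuation canon_worlds canon_le canon_V"
    unfolding valuation_def upset_def canon_V_def canon_le_def by blast
  ultimately have "canon_sat M \<phi>"
    using assms M(1) unfolding valid511_def valid_frame_def by blast
  then show False using canon_truth M by blast
qed

theorem theorem5p11:
  shows "(\<phi> \<in> L511 \<longrightarrow> valid511 TYPE('w) \<phi>) \<and> (valid511 TYPE(fm set) \<phi> \<longrightarrow> \<phi> \<in> L511)"
  using L511_sound L511_complete unfolding valid511_def by blast

end
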